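(* Let $\boldsymbol{M}$ be a log-convex sequence. Then: (i) $\boldsymbol{M}_{+1}\subset\widetilde{\boldsymbol{M}}$. (ii) The following statements are equivalent: (1) $\boldsymbol{M}$ satisfies $\operatorname{(sm)}$; (2) $\boldsymbol{M}_{+1}$ satisfies $\operatorname{(sm)}$; (3) $\boldsymbol{M}_{+1}\approx\widetilde{\boldsymbol{M}}$; (4) $\widetilde{\boldsymbol{M}}$ satisfies $\operatorname{(sm)}$.
   Context: $\boldsymbol{M}=(M_p)_{p\in\mathbb{N}_0}$ is a sequence of positive reals with $M_0=1$, with quotients $m_p=M_{p+1}/M_p$; log-convex means $M_p^2\le M_{p-1}M_{p+1}$ for $p\ge1$ (equivalently $(m_p)$ nondecreasing). $\boldsymbol{M}_{+1}=(M_{p+1})_p$ and $\widetilde{\boldsymbol{M}}=(\widetilde M_p)_p$ with $\widetilde M_p=M_{p+1}\log(e^2m_{p+1}/m_p)$. For any sequence $\boldsymbol{N}$ with quotients $n_p=N_{p+1}/N_p$, $\operatorname{(sm)}$ means there are $C_0>0$, $H>1$ with $\log(n_{p+1}/n_p)\le C_0H^{p+1}$ for all $p\in\mathbb{N}_0$. $\boldsymbol{N}\subset\boldsymbol{P}$ means there are $C,h>0$ with $N_p\le Ch^pP_p$ for all $p$; $\boldsymbol{N}\approx\boldsymbol{P}$ means $\boldsymbol{N}\subset\boldsymbol{P}$ and $\boldsymbol{P}\subset\boldsymbol{N}$. *)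

theory Defs
  imports Complex_Main
begin

definition quot :: "(nat \<Rightarrow> real) \<Rightarrow> nat \<Rightarrow> real" where
  "quot N p = N (Suc p) / N p"

definition weight_seq :: "(nat \<Rightarrow> real) \<Rightarrow> bool" where
  "weight_seq M \<longleftrightarrow> (\<forall>p. M p > 0) \<and> M 0 = 1"

definition log_convex :: "(nat \<Rightarrow> real) \<Rightarrow> bool" where
  "log_convex M \<longleftrightarrow> (\<forall>p\<ge>1. (M p)^2 \<le> M (p - 1) * M (p + 1))"

definition shift1 :: "(nat \<Rightarrow> real) \<Rightarrow> nat \<Rightarrow> real" where
  "shift1 M p = M (p + 1)"

definition Mtilde :: "(nat \<Rightarrow> real) \<Rightarrow> nat \<Rightarrow> real" where
  "Mtilde M p = M (p + 1) * ln (exp 2 * quot M (p + 1) / quot M p)"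

definition sm :: "(nat \<Rightarrow> real) \<Rightarrow> bool" where
  "sm N \<longleftrightarrow> (\<exists>C0 > 0. \<exists>H > 1. \<forall>p. ln (quot N (p + 1) / quot N p) \<le> C0 * H ^ (p + 1))"

definition seq_incl :: "(nat \<Rightarrow> real) \<Rightarrow> (nat \<Rightarrow> real) \<Rightarrow> bool" where
  "seq_incl N P \<longleftrightarrow> (\<exists>C > 0. \<exists>h > 0. \<forall>p. N p \<le> C * h ^ p * P p)"

definition seq_equiv :: "(nat \<Rightarrow> real) \<Rightarrow> (nat \<Rightarrow> real) \<Rightarrow> bool" where
  "seq_equiv N P \<longleftrightarrow> seq_incl N P \<and> seq_incl P N"

end

theory Submission
  imports Defs
begin

text \<open>
  Put \<open>a\<^sub>p = log (m\<^sub>p\<^sub>+\<^sub>1 / m\<^sub>p)\<close>, which is nonnegative by log-convexity;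
  (sm) for \<open>M\<close> says that \<open>a\<close> is exponentially bounded, and \<open>M\<^sub>+\<^sub>1\<close> has the
  sequence \<open>a\<close> shifted by one. Since \<open>Mtilde\<^sub>p = M\<^sub>p\<^sub>+\<^sub>1 (2 + a\<^sub>p)\<close>, part (i) is
  immediate, and \<open>Mtilde \<subset> M\<^sub>+\<^sub>1\<close> says that \<open>2 + a\<^sub>p\<close> is geometrically bounded,
  which is again (sm) for \<open>M\<close>. The log quotient ratio of \<open>Mtilde\<close> is \<open>a\<^sub>p\<^sub>+\<^sub>1\<close> plus
  the second difference of \<open>log (2 + a)\<close>. From \<open>log 2 \<le> log (2 + x) \<le> log 2 + x/2\<close>
  and \<open>log (2 + x) \<le> x/4 + const\<close> it lies between \<open>a\<^sub>p\<^sub>+\<^sub>1/2 - const\<close> and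
  \<open>a\<^sub>p\<^sub>+\<^sub>1 + (a\<^sub>p + a\<^sub>p\<^sub>+\<^sub>2)/2\<close>, so it is exponentially bounded iff \<open>a\<close> is.
\<close>

definition exp_bounded :: "(nat \<Rightarrow> real) \<Rightarrow> bool" where
  "exp_bounded a \<longleftrightarrow> (\<exists>C > 0. \<exists>H > 1. \<forall>p. a p \<le> C * H ^ (p + 1))"

lemma exp_bounded_mono:
  assumes "exp_bounded b" and "\<And>p. a p \<le> b p"
  shows "exp_bounded a"
  using assms unfolding exp_bounded_def by (meson order_trans)

lemma exp_bounded_const: "exp_bounded (\<lambda>_. c)"
proof -
  have "c \<le> (\<bar>c\<bar> + 1) * 2 ^ (p + 1)" for p
  proof -
    have "c \<le> (\<bar>c\<bar> + 1) * 1" by simp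
    also have "\<dots> \<le> (\<bar>c\<bar> + 1) * 2 ^ (p + 1)"
      by (intro mult_left_mono one_le_power) auto
    finally show ?thesis .
  qed
  then show ?thesis unfolding exp_bounded_def
    by (intro exI[of _ "\<bar>c\<bar> + 1"] conjI exI[of _ "2::real"]) auto
qed

lemma exp_bounded_add:
  assumes "exp_bounded a" and "exp_bounded b"
  shows "exp_bounded (\<lambda>p. a p + b p)"
proof -
  obtain C1 H1 where C1: "C1 > 0" "H1 > 1" "\<And>p. a p \<le> C1 * H1 ^ (p + 1)"
    using assms(1) unfolding exp_bounded_def by blast
  obtain C2 H2 where C2: "C2 > 0" "H2 > 1" "\<And>p. b p \<le> C2 * H2 ^ (p + 1)"
    using assms(2) unfolding exp_bounded_def by blast
  define H where "H = max H1 H2"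
  have "a p + b p \<le> (C1 + C2) * H ^ (p + 1)" for p
  proof -
    have "C1 * H1 ^ (p + 1) \<le> C1 * H ^ (p + 1)" "C2 * H2 ^ (p + 1) \<le> C2 * H ^ (p + 1)"
      using C1 C2 unfolding H_def
      by (intro mult_left_mono power_mono; simp)+
    then show ?thesis using C1(3)[of p] C2(3)[of p] by (simp add: algebra_simps)
  qed
  moreover have "C1 + C2 > 0" "H > 1" using C1 C2 unfolding H_def by auto
  ultimately show ?thesis unfolding exp_bounded_def by blast
qed

lemma exp_bounded_cmult:
  assumes "exp_bounded a" and "c \<ge> 0"
  shows "exp_bounded (\<lambda>p. c * a p)"
proof -
  obtain C H where C: "C > 0" "H > 1" "\<And>p. a p \<le> C * H ^ (p + 1)"
    using assms(1) unfolding exp_bounded_def by blast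
  have "c * a p \<le> ((c + 1) * C) * H ^ (p + 1)" for p
  proof -
    have "c * a p \<le> c * (C * H ^ (p + 1))" using C(3) assms(2) by (rule mult_left_mono)
    also have "\<dots> \<le> (c + 1) * (C * H ^ (p + 1))" using C by (intro mult_right_mono) auto
    finally show ?thesis by (simp add: mult.assoc)
  qed
  moreover have "(c + 1) * C > 0" using C assms(2) by simp
  ultimately show ?thesis unfolding exp_bounded_def using C(2) by blast
qed

lemma exp_bounded_Suc_iff: "exp_bounded (\<lambda>p. a (Suc p)) \<longleftrightarrow> exp_bounded a"
proof
  assume "exp_bounded a"
  then obtain C H where C: "C > 0" "H > 1" "\<And>p. a p \<le> C * H ^ (p + 1)"
    unfolding exp_bounded_def by blast
  have "a (Suc p) \<le> (C * H) * H ^ (p + 1)" for p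
    using C(3)[of "Suc p"] by (simp add: mult.assoc)
  then show "exp_bounded (\<lambda>p. a (Suc p))"
    unfolding exp_bounded_def using C by (intro exI[of _ "C * H"]) auto
next
  assume "exp_bounded (\<lambda>p. a (Suc p))"
  then obtain C H where C: "C > 0" "H > 1" "\<And>p. a (Suc p) \<le> C * H ^ (p + 1)"
    unfolding exp_bounded_def by blast
  define C' where "C' = max C (\<bar>a 0\<bar> + 1)"
  have "a p \<le> C' * H ^ (p + 1)" for p
  proof (cases p)
    case 0
    have "a 0 \<le> (\<bar>a 0\<bar> + 1) * 1" by simp
    also have "\<dots> \<le> C' * H" unfolding C'_def using C(2) by (intro mult_mono) auto
    finally show ?thesis using 0 by simp
  next
    case (Suc q)
    have "a p \<le> C * H ^ (q + 1)" using C(3) Suc by simp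
    also have "\<dots> \<le> C' * H ^ (p + 1)" unfolding C'_def using C Suc
      by (intro mult_mono power_increasing) auto
    finally show ?thesis .
  qed
  moreover have "C' > 0" unfolding C'_def using C by auto
  ultimately show "exp_bounded a" unfolding exp_bounded_def using C(2) by blast
qed

lemma exp_bounded_iff_geometric_bound:
  assumes "c \<ge> 0"
  shows "exp_bounded a \<longleftrightarrow> (\<exists>C > 0. \<exists>h > 0. \<forall>p. c + a p \<le> C * h ^ p)"
proof
  assume "exp_bounded a"
  then obtain C H where C: "C > 0" "H > 1" "\<And>p. a p \<le> C * H ^ (p + 1)"
    unfolding exp_bounded_def by blast
  have "c + a p \<le> (c + C * H) * H ^ p" for p
  proof -
    have "c \<le> c * H ^ p" using assms C(2) by (simp add: mult_le_cancel_left1)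
    then show ?thesis using C(3)[of p] by (simp add: algebra_simps)
  qed
  moreover have "c + C * H > 0" using assms C by (simp add: add_nonneg_pos)
  ultimately show "\<exists>C > 0. \<exists>h > 0. \<forall>p. c + a p \<le> C * h ^ p"
    using C(2) by (intro exI[of _ "c + C * H"] conjI exI[of _ H]) auto
next
  assume "\<exists>C > 0. \<exists>h > 0. \<forall>p. c + a p \<le> C * h ^ p"
  then obtain C h where C: "C > 0" "h > 0" "\<And>p. c + a p \<le> C * h ^ p" by blast
  define H where "H = max h 2"
  have "a p \<le> C * H ^ (p + 1)" for p
  proof -
    have "a p \<le> C * h ^ p" using C(3)[of p] assms by simp
    also have "\<dots> \<le> C * H ^ p" unfolding H_def using C by (intro mult_left_mono power_mono) auto
    also have "\<dots> \<le> C * H ^ (p + 1)" unfolding H_def using C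
      by (intro mult_left_mono power_increasing) auto
    finally show ?thesis .
  qed
  then show "exp_bounded a" unfolding exp_bounded_def H_def using C(1) by force
qed

lemma ln_le_quarter_plus_const:
  fixes y :: real
  assumes "y > 0"
  shows "ln y \<le> y / 4 + ln 4 - 1"
proof -
  have "ln (y / 4) \<le> y / 4 - 1" using assms by (intro ln_le_minus_one) auto
  then show ?thesis using assms by (simp add: ln_div)
qed

lemma ln_two_plus_le:
  fixes x :: real
  assumes "x \<ge> 0"
  shows "ln (2 + x) \<le> ln 2 + x / 2"
proof -
  have "ln (2 + x) = ln (2 * (1 + x / 2))" by simp
  also have "\<dots> = ln 2 + ln (1 + x / 2)" using assms by (intro ln_mult_pos) auto
  finally have "ln (2 + x) = ln 2 + ln (1 + x / 2)" .
  moreover have "ln (1 + x / 2) \<le> x / 2" using assms by (intro ln_add_one_self_le_self) auto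
  ultimately show ?thesis by simp
qed

lemma exp_bounded_log_second_difference_iff:
  assumes nonneg: "\<And>p. a p \<ge> 0"
  shows "exp_bounded
           (\<lambda>p. a (Suc p) + ln (2 + a (p + 2)) + ln (2 + a p) - 2 * ln (2 + a (Suc p)))
         \<longleftrightarrow> exp_bounded a" (is "exp_bounded ?b \<longleftrightarrow> _")
proof
  assume "exp_bounded ?b"
  have "a (Suc p) \<le> 2 * ?b p + 4 * ln 4" for p
  proof -
    have "ln (2 + a (p + 2)) \<ge> 0" "ln (2 + a p) \<ge> 0" using nonneg[of p] nonneg[of "p + 2"] by auto
    moreover have "ln (2 + a (Suc p)) \<le> (2 + a (Suc p)) / 4 + ln 4 - 1"
      using nonneg[of "Suc p"] by (intro ln_le_quarter_plus_const) auto
    ultimately show ?thesis by argo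
  qed
  moreover have "exp_bounded (\<lambda>p. 2 * ?b p + 4 * ln 4)"
    using \<open>exp_bounded ?b\<close> by (intro exp_bounded_add exp_bounded_cmult exp_bounded_const) auto
  ultimately have "exp_bounded (\<lambda>p. a (Suc p))" by (rule exp_bounded_mono[rotated])
  then show "exp_bounded a" by (simp only: exp_bounded_Suc_iff)
next
  assume "exp_bounded a"
  have "?b p \<le> a (Suc p) + 1/2 * a (Suc (Suc p)) + 1/2 * a p" for p
  proof -
    have "ln (2 + a q) \<le> ln 2 + a q / 2" "ln (2 + a q) \<ge> ln 2" for q
      using ln_two_plus_le nonneg[of q] by auto
    from this[of p] this[of "Suc p"] this[of "p + 2"] show ?thesis by simp
  qed
  moreover have "exp_bounded (\<lambda>p. a (Suc p) + 1/2 * a (Suc (Suc p)) + 1/2 * a p)"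
  proof (intro exp_bounded_add exp_bounded_cmult)
    show "exp_bounded (\<lambda>p. a (Suc p))" "exp_bounded (\<lambda>p. a (Suc (Suc p)))"
      using \<open>exp_bounded a\<close> exp_bounded_Suc_iff[of a] exp_bounded_Suc_iff[of "\<lambda>p. a (Suc p)"]
      by simp_all
  qed (use \<open>exp_bounded a\<close> in auto)
  ultimately show "exp_bounded ?b" by (rule exp_bounded_mono[rotated])
qed

definition log_quot_ratio :: "(nat \<Rightarrow> real) \<Rightarrow> nat \<Rightarrow> real" where
  "log_quot_ratio N p = ln (quot N (p + 1) / quot N p)"

lemma sm_iff_exp_bounded: "sm N \<longleftrightarrow> exp_bounded (log_quot_ratio N)"
  unfolding sm_def exp_bounded_def log_quot_ratio_def by simp

lemma log_quot_ratio_eq_ln_diff: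
  assumes "\<And>p. N p > 0"
  shows "log_quot_ratio N p = ln (N (p + 2)) - 2 * ln (N (Suc p)) + ln (N p)"
proof -
  have ln_quot: "ln (quot N q) = ln (N (Suc q)) - ln (N q)" for q
    unfolding quot_def using assms by (intro ln_divide_pos)
  have "quot N q > 0" for q unfolding quot_def using assms by (intro divide_pos_pos)
  then have "log_quot_ratio N p = ln (quot N (Suc p)) - ln (quot N p)"
    unfolding log_quot_ratio_def by (simp add: ln_divide_pos)
  then show ?thesis by (simp add: ln_quot numeral_2_eq_2)
qed

lemma log_quot_ratio_mult:
  assumes "\<And>p. N p > 0" and "\<And>p. u p > 0"
  shows "log_quot_ratio (\<lambda>p. N p * u p) p
           = log_quot_ratio N p + ln (u (p + 2)) + ln (u p) - 2 * ln (u (Suc p))"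
  using assms by (simp add: log_quot_ratio_eq_ln_diff ln_mult_pos algebra_simps)

lemma log_quot_ratio_shift1: "log_quot_ratio (shift1 N) p = log_quot_ratio N (Suc p)"
  by (simp add: log_quot_ratio_def quot_def shift1_def)

lemma sm_shift1_iff: "sm (shift1 N) \<longleftrightarrow> sm N"
  unfolding sm_iff_exp_bounded log_quot_ratio_shift1 by (rule exp_bounded_Suc_iff)

lemma log_quot_ratio_nonneg:
  assumes "weight_seq M" and "log_convex M"
  shows "log_quot_ratio M p \<ge> 0"
proof -
  have pos: "M q > 0" for q using assms(1) unfolding weight_seq_def by simp
  have "(M (Suc p))\<^sup>2 \<le> M p * M (Suc (Suc p))"
    using assms(2) unfolding log_convex_def by (auto dest: spec[of _ "Suc p"])
  then have "quot M p \<le> quot M (Suc p)"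
    using pos[of p] pos[of "Suc p"]
    by (simp add: quot_def divide_simps power2_eq_square mult.commute)
  moreover have "quot M p > 0" unfolding quot_def using pos by simp
  ultimately show ?thesis unfolding log_quot_ratio_def by simp
qed

lemma Mtilde_eq:
  assumes "weight_seq M"
  shows "Mtilde M p = shift1 M p * (2 + log_quot_ratio M p)"
proof -
  have "quot M q > 0" for q using assms unfolding weight_seq_def quot_def by simp
  then have "quot M (p + 1) / quot M p > 0" by (intro divide_pos_pos)
  then have "ln (exp 2 * (quot M (p + 1) / quot M p)) = 2 + log_quot_ratio M p"
    unfolding log_quot_ratio_def by (simp only: ln_mult_pos exp_gt_zero ln_exp Suc_eq_plus1)
  then show ?thesis unfolding Mtilde_def shift1_def by simp
qed

lemma seq_incl_shift1_Mtilde: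
  assumes "weight_seq M" and "log_convex M"
  shows "seq_incl (shift1 M) (Mtilde M)"
proof -
  have "shift1 M p \<le> 1 * 1 ^ p * Mtilde M p" for p
  proof -
    have "shift1 M p > 0" using assms(1) unfolding weight_seq_def shift1_def by simp
    then have "shift1 M p * 1 \<le> shift1 M p * (2 + log_quot_ratio M p)"
      using log_quot_ratio_nonneg[OF assms, of p] by (intro mult_left_mono) auto
    then show ?thesis unfolding Mtilde_eq[OF assms(1)] by simp
  qed
  then show ?thesis unfolding seq_incl_def by (meson zero_less_one)
qed

lemma seq_incl_Mtilde_shift1_iff:
  assumes "weight_seq M"
  shows "seq_incl (Mtilde M) (shift1 M) \<longleftrightarrow> sm M"
proof -
  have "Mtilde M p \<le> C * h ^ p * shift1 M p \<longleftrightarrow> 2 + log_quot_ratio M p \<le> C * h ^ p" for C h p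
    using assms unfolding Mtilde_eq[OF assms] weight_seq_def shift1_def
    by (simp add: mult.commute mult.left_commute)
  then show ?thesis
    unfolding seq_incl_def sm_iff_exp_bounded by (simp add: exp_bounded_iff_geometric_bound[of 2])
qed

lemma sm_Mtilde_iff:
  assumes "weight_seq M" and "log_convex M"
  shows "sm (Mtilde M) \<longleftrightarrow> sm M"
proof -
  let ?a = "log_quot_ratio M"
  have nonneg: "?a p \<ge> 0" for p using log_quot_ratio_nonneg[OF assms] .
  have "shift1 M p > 0" for p using assms(1) unfolding weight_seq_def shift1_def by simp
  moreover have "2 + ?a p > 0" for p using nonneg[of p] by simp
  ultimately have "log_quot_ratio (Mtilde M)
      = (\<lambda>p. ?a (Suc p) + ln (2 + ?a (p + 2)) + ln (2 + ?a p) - 2 * ln (2 + ?a (Suc p)))"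
    unfolding Mtilde_eq[OF assms(1), abs_def]
    by (simp add: fun_eq_iff log_quot_ratio_mult log_quot_ratio_shift1)
  then show ?thesis
    unfolding sm_iff_exp_bounded using exp_bounded_log_second_difference_iff[of ?a] nonneg by simp
qed

theorem proposition4p14:
  fixes M :: "nat \<Rightarrow> real"
  assumes "weight_seq M" and "log_convex M"
  shows "seq_incl (shift1 M) (Mtilde M)
         \<and> (sm M \<longleftrightarrow> sm (shift1 M)) \<and> (sm (shift1 M) \<longleftrightarrow> seq_equiv (shift1 M) (Mtilde M))
         \<and> (seq_equiv (shift1 M) (Mtilde M) \<longleftrightarrow> sm (Mtilde M))"
proof -
  have incl: "seq_incl (shift1 M) (Mtilde M)" using seq_incl_shift1_Mtilde[OF assms] .
  then have "seq_equiv (shift1 M) (Mtilde M) \<longleftrightarrow> sm M"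
    unfolding seq_equiv_def using seq_incl_Mtilde_shift1_iff[OF assms(1)] by simp
  then show ?thesis using incl sm_shift1_iff[of M] sm_Mtilde_iff[OF assms] by blast
qed

end
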